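(* Let $(\omega,\nabla)$ be Poisson-compatible. The quantum torsion of the quantised connection $\nabla_Q$ on $\Omega^1A_1$ is $$(\wedge_1\nabla_Q-d)(\xi)=(\wedge\nabla-d)(\xi)+\tfrac\lambda4(\partial_j\lrcorner\nabla_i\xi)\,\omega^{is}T^j{}_{nm;s}\,dx^m\wedge dx^n .$$
   Context: Coordinates $x^i$, summation convention, $\lrcorner$ interior product, $a_{,i}=\partial_ia$. $\nabla_jdx^i=-\Gamma^i_{jk}dx^k$; torsion $T^i_{jk}=\Gamma^i_{jk}-\Gamma^i_{kj}$; curvature $[\nabla_i,\nabla_j]dx^k=-R^k{}_{mij}dx^m$; semicolon = covariant derivative w.r.t. $\nabla$. Poisson-compatible: $d(\omega^{ij})-\omega^{kj}\nabla_k(dx^i)-\omega^{ik}\nabla_k(dx^j)=0$. Work over $\mathbb{C}[\lambda]/(\lambda^2)$. $\Omega^1A_1$: 1-forms with $a\bullet\xi=a\xi+\frac\lambda2\omega^{ij}a_{,i}\nabla_j\xi$, $\xi\bullet a=a\xi-\frac\lambda2\omega^{ij}a_{,i}\nabla_j\xi$; $\otimes_1$ over the algebra with $a\bullet b=ab+\frac\lambda2\omega^{ij}a_{,i}b_{,j}$; $q(\xi\otimes_1\eta)=\xi\otimes_0\eta+\frac\lambda2\omega^{ij}\nabla_i\xi\otimes_0\nabla_j\eta$. $\nabla_Q\xi=q^{-1}(dx^k\otimes_0\nabla_k\xi)-\frac\lambda2\omega^{ij}dx^k\otimes_1[\nabla_k,\nabla_j]\nabla_i\xi$. $\xi\wedge_1\eta=\xi\wedge\eta+\frac\lambda2\omega^{ij}\nabla_i\xi\wedge\nabla_j\eta+\lambda(-1)^{|\xi|+1}H^{ij}\wedge(\partial_i\lrcorner\xi)\wedge(\partial_j\lrcorner\eta)$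 with $H^{ij}=\frac14\omega^{is}(T^j{}_{nm;s}-2R^j{}_{nms})dx^m\wedge dx^n$. *)

theory Defs
  imports "HOL-Analysis.Analysis" "HOL-Library.Multiset"
begin

text \<open>Local coordinate model on an open chart U of real^'n.
  Christoffel symbols: Gam i j k = Gamma^i_{jk}; Poisson bivector: om i j = omega^{ij}.
  A 1-form is given by its components xi k (xi = xi_k dx^k).
  A 2-form F is represented by F m n meaning sum_{m,n} F m n dx^m wedge dx^n;
  two such representatives are equal as 2-forms iff their antisymmetrisations agree.
  Objects over C[lambda]/(lambda^2) are pairs (order-0 part, order-1 part).\<close>

definition pd :: "'n::finite \<Rightarrow> (real^'n \<Rightarrow> 'a::real_normed_vector) \<Rightarrow> real^'n \<Rightarrow> 'a" where
  "pd i f x = vector_derivative (\<lambda>t. f (x + t *\<^sub>R axis i 1)) (at 0)"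

fun pds :: "'n::finite list \<Rightarrow> (real^'n \<Rightarrow> 'a::real_normed_vector) \<Rightarrow> real^'n \<Rightarrow> 'a" where
  "pds [] f = f"
| "pds (i # is) f = pd i (pds is f)"

definition smooth_in :: "(real^'n::finite \<Rightarrow> 'a::real_normed_vector) \<Rightarrow> (real^'n) set \<Rightarrow> bool" where
  "smooth_in f U \<longleftrightarrow> (\<forall>is. \<forall>x\<in>U. pds is f differentiable (at x))"

definition dx :: "'n::finite \<Rightarrow> 'n \<Rightarrow> real^'n \<Rightarrow> complex" where
  "dx k = (\<lambda>m x. if m = k then 1 else 0)"

text \<open>nabla_j xi for a 1-form xi, with nabla_j dx^i = - Gamma^i_{jk} dx^k.\<close>
definition covd :: "('n::finite \<Rightarrow> 'n \<Rightarrow> 'n \<Rightarrow> real^'n \<Rightarrow> real) \<Rightarrow> 'n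
    \<Rightarrow> ('n \<Rightarrow> real^'n \<Rightarrow> complex) \<Rightarrow> ('n \<Rightarrow> real^'n \<Rightarrow> complex)" where
  "covd Gam j xi = (\<lambda>k x. pd j (xi k) x - (\<Sum>i\<in>UNIV. complex_of_real (Gam i j k x) * xi i x))"

definition tors :: "('n::finite \<Rightarrow> 'n \<Rightarrow> 'n \<Rightarrow> real^'n \<Rightarrow> real) \<Rightarrow> 'n \<Rightarrow> 'n \<Rightarrow> 'n \<Rightarrow> real^'n \<Rightarrow> real" where
  "tors Gam i j k x = Gam i j k x - Gam i k j x"

definition tors_cd :: "('n::finite \<Rightarrow> 'n \<Rightarrow> 'n \<Rightarrow> real^'n \<Rightarrow> real) \<Rightarrow> 'n \<Rightarrow> 'n \<Rightarrow> 'n \<Rightarrow> 'n \<Rightarrow> real^'n \<Rightarrow> real" where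
  "tors_cd Gam j n m s x = pd s (tors Gam j n m) x
     + (\<Sum>p\<in>UNIV. Gam j s p x * tors Gam p n m x)
     - (\<Sum>p\<in>UNIV. Gam p s n x * tors Gam j p m x)
     - (\<Sum>p\<in>UNIV. Gam p s m x * tors Gam j n p x)"

text \<open>Curvature: [nabla_i, nabla_j] dx^k = - R^k_{m i j} dx^m;  curv Gam k m i j = R^k_{mij}.\<close>
definition curv :: "('n::finite \<Rightarrow> 'n \<Rightarrow> 'n \<Rightarrow> real^'n \<Rightarrow> real) \<Rightarrow> 'n \<Rightarrow> 'n \<Rightarrow> 'n \<Rightarrow> 'n \<Rightarrow> real^'n \<Rightarrow> complex" where
  "curv Gam k m i j x = - (covd Gam i (covd Gam j (dx k)) m x - covd Gam j (covd Gam i (dx k)) m x)"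

definition wedge :: "('n::finite \<Rightarrow> real^'n \<Rightarrow> complex) \<Rightarrow> ('n \<Rightarrow> real^'n \<Rightarrow> complex) \<Rightarrow> 'n \<Rightarrow> 'n \<Rightarrow> real^'n \<Rightarrow> complex" where
  "wedge a b = (\<lambda>m n x. a m x * b n x)"

definition dform :: "('n::finite \<Rightarrow> real^'n \<Rightarrow> complex) \<Rightarrow> 'n \<Rightarrow> 'n \<Rightarrow> real^'n \<Rightarrow> complex" where
  "dform xi = (\<lambda>m n x. pd m (xi n) x)"

definition eq2 :: "(real^'n::finite) set \<Rightarrow> ('n \<Rightarrow> 'n \<Rightarrow> real^'n \<Rightarrow> complex) \<Rightarrow> ('n \<Rightarrow> 'n \<Rightarrow> real^'n \<Rightarrow> complex) \<Rightarrow> bool" where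
  "eq2 U F G \<longleftrightarrow> (\<forall>x\<in>U. \<forall>m n. F m n x - F n m x = G m n x - G n m x)"

definition poisson_bivector :: "(real^'n::finite) set \<Rightarrow> ('n \<Rightarrow> 'n \<Rightarrow> real^'n \<Rightarrow> real) \<Rightarrow> bool" where
  "poisson_bivector U om \<longleftrightarrow>
     (\<forall>x\<in>U. \<forall>i j. om i j x = - om j i x) \<and>
     (\<forall>x\<in>U. \<forall>i j k. (\<Sum>l\<in>UNIV. om i l x * pd l (om j k) x + om j l x * pd l (om k i) x
                                  + om k l x * pd l (om i j) x) = 0)"

definition poisson_compatible :: "(real^'n::finite) set \<Rightarrow> ('n \<Rightarrow> 'n \<Rightarrow> real^'n \<Rightarrow> real)
    \<Rightarrow> ('n \<Rightarrow> 'n \<Rightarrow> 'n \<Rightarrow> real^'n \<Rightarrow> real) \<Rightarrow> bool" where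
  "poisson_compatible U om Gam \<longleftrightarrow>
     (\<forall>x\<in>U. \<forall>i j m. complex_of_real (pd m (om i j) x)
        - (\<Sum>k\<in>UNIV. complex_of_real (om k j x) * covd Gam k (dx i) m x)
        - (\<Sum>k\<in>UNIV. complex_of_real (om i k x) * covd Gam k (dx j) m x) = 0)"

type_synonym ('n) form1 = "'n \<Rightarrow> real^'n \<Rightarrow> complex"

definition ldx :: "'n::finite \<Rightarrow> ('n form1 \<times> 'n form1)" where
  "ldx k = (dx k, \<lambda>m x. 0)"

definition lcovd :: "('n::finite \<Rightarrow> 'n \<Rightarrow> 'n \<Rightarrow> real^'n \<Rightarrow> real) \<Rightarrow> 'n
    \<Rightarrow> ('n form1 \<times> 'n form1) \<Rightarrow> ('n form1 \<times> 'n form1)" where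
  "lcovd Gam j a = (covd Gam j (fst a), covd Gam j (snd a))"

text \<open>multiplication by lambda\<close>
definition lsc :: "('n::finite form1 \<times> 'n form1) \<Rightarrow> ('n form1 \<times> 'n form1)" where
  "lsc a = (\<lambda>k x. 0, fst a)"

definition lmul :: "(real^'n::finite \<Rightarrow> complex) \<Rightarrow> ('n form1 \<times> 'n form1) \<Rightarrow> ('n form1 \<times> 'n form1)" where
  "lmul c a = (\<lambda>k x. c x * fst a k x, \<lambda>k x. c x * snd a k x)"

definition lsub :: "('n::finite form1 \<times> 'n form1) \<Rightarrow> ('n form1 \<times> 'n form1) \<Rightarrow> ('n form1 \<times> 'n form1)" where
  "lsub a b = (\<lambda>k x. fst a k x - fst b k x, \<lambda>k x. snd a k x - snd b k x)"

definition lcomm :: "('n::finite \<Rightarrow> 'n \<Rightarrow> 'n \<Rightarrow> real^'n \<Rightarrow> real) \<Rightarrow> 'n \<Rightarrow> 'n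
    \<Rightarrow> ('n form1 \<times> 'n form1) \<Rightarrow> ('n form1 \<times> 'n form1)" where
  "lcomm Gam k j eta = lsub (lcovd Gam k (lcovd Gam j eta)) (lcovd Gam j (lcovd Gam k eta))"

text \<open>Tensors in Omega^1 otimes Omega^1 (both otimes_0 and otimes_1) are represented by
  finite formal sums (multisets) of elementary tensors of lambda-1-forms.
  q^{-1}, to first order in lambda: q^{-1}(a otimes_0 b) = a otimes_1 b - lambda/2 omega^{ij} nabla_i a otimes_1 nabla_j b.\<close>
definition qinv :: "('n::finite \<Rightarrow> 'n \<Rightarrow> real^'n \<Rightarrow> real) \<Rightarrow> ('n \<Rightarrow> 'n \<Rightarrow> 'n \<Rightarrow> real^'n \<Rightarrow> real)
    \<Rightarrow> (('n form1 \<times> 'n form1) \<times> ('n form1 \<times> 'n form1)) multiset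
    \<Rightarrow> (('n form1 \<times> 'n form1) \<times> ('n form1 \<times> 'n form1)) multiset" where
  "qinv om Gam M = sum_mset (image_mset (\<lambda>(a, b). {#(a, b)#} +
      image_mset (\<lambda>(i, j). (lsc (lmul (\<lambda>x. - complex_of_real (om i j x) / 2) (lcovd Gam i a)),
                             lcovd Gam j b)) (mset_set UNIV)) M)"

definition nablaQ :: "('n::finite \<Rightarrow> 'n \<Rightarrow> real^'n \<Rightarrow> real) \<Rightarrow> ('n \<Rightarrow> 'n \<Rightarrow> 'n \<Rightarrow> real^'n \<Rightarrow> real)
    \<Rightarrow> ('n form1 \<times> 'n form1) \<Rightarrow> (('n form1 \<times> 'n form1) \<times> ('n form1 \<times> 'n form1)) multiset" where
  "nablaQ om Gam xi =
     qinv om Gam (image_mset (\<lambda>k. (ldx k, lcovd Gam k xi)) (mset_set UNIV))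
     + image_mset (\<lambda>(i, j, k). (lsc (lmul (\<lambda>x. - complex_of_real (om i j x) / 2) (ldx k)),
                                lcomm Gam k j (lcovd Gam i xi))) (mset_set UNIV)"

definition Hform :: "('n::finite \<Rightarrow> 'n \<Rightarrow> real^'n \<Rightarrow> real) \<Rightarrow> ('n \<Rightarrow> 'n \<Rightarrow> 'n \<Rightarrow> real^'n \<Rightarrow> real)
    \<Rightarrow> 'n \<Rightarrow> 'n \<Rightarrow> 'n \<Rightarrow> 'n \<Rightarrow> real^'n \<Rightarrow> complex" where
  "Hform om Gam i j m n x = (1/4) * (\<Sum>s\<in>UNIV. complex_of_real (om i s x) *
      (complex_of_real (tors_cd Gam j n m s x) - 2 * curv Gam j n m s x))"

text \<open>xi wedge_1 eta for 1-forms (|xi| = 1, so the sign (-1)^{|xi|+1} is +1).\<close>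
definition wedge1 :: "('n::finite \<Rightarrow> 'n \<Rightarrow> real^'n \<Rightarrow> real) \<Rightarrow> ('n \<Rightarrow> 'n \<Rightarrow> 'n \<Rightarrow> real^'n \<Rightarrow> real)
    \<Rightarrow> ('n form1 \<times> 'n form1) \<Rightarrow> ('n form1 \<times> 'n form1)
    \<Rightarrow> ('n \<Rightarrow> 'n \<Rightarrow> real^'n \<Rightarrow> complex) \<times> ('n \<Rightarrow> 'n \<Rightarrow> real^'n \<Rightarrow> complex)" where
  "wedge1 om Gam a b =
     (wedge (fst a) (fst b),
      \<lambda>m n x. wedge (fst a) (snd b) m n x + wedge (snd a) (fst b) m n x
        + (\<Sum>i\<in>UNIV. \<Sum>j\<in>UNIV. complex_of_real (om i j x) / 2
              * wedge (covd Gam i (fst a)) (covd Gam j (fst b)) m n x)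
        + (\<Sum>i\<in>UNIV. \<Sum>j\<in>UNIV. Hform om Gam i j m n x * fst a i x * fst b j x))"

definition Wedge1 :: "('n::finite \<Rightarrow> 'n \<Rightarrow> real^'n \<Rightarrow> real) \<Rightarrow> ('n \<Rightarrow> 'n \<Rightarrow> 'n \<Rightarrow> real^'n \<Rightarrow> real)
    \<Rightarrow> (('n form1 \<times> 'n form1) \<times> ('n form1 \<times> 'n form1)) multiset
    \<Rightarrow> ('n \<Rightarrow> 'n \<Rightarrow> real^'n \<Rightarrow> complex) \<times> ('n \<Rightarrow> 'n \<Rightarrow> real^'n \<Rightarrow> complex)" where
  "Wedge1 om Gam M =
     (\<lambda>m n x. sum_mset (image_mset (\<lambda>(a, b). fst (wedge1 om Gam a b) m n x) M),
      \<lambda>m n x. sum_mset (image_mset (\<lambda>(a, b). snd (wedge1 om Gam a b) m n x) M))"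

definition qtorsion :: "('n::finite \<Rightarrow> 'n \<Rightarrow> real^'n \<Rightarrow> real) \<Rightarrow> ('n \<Rightarrow> 'n \<Rightarrow> 'n \<Rightarrow> real^'n \<Rightarrow> real)
    \<Rightarrow> ('n form1 \<times> 'n form1)
    \<Rightarrow> ('n \<Rightarrow> 'n \<Rightarrow> real^'n \<Rightarrow> complex) \<times> ('n \<Rightarrow> 'n \<Rightarrow> real^'n \<Rightarrow> complex)" where
  "qtorsion om Gam xi =
     (\<lambda>m n x. fst (Wedge1 om Gam (nablaQ om Gam xi)) m n x - dform (fst xi) m n x,
      \<lambda>m n x. snd (Wedge1 om Gam (nablaQ om Gam xi)) m n x - dform (snd xi) m n x)"

definition ctorsion :: "('n::finite \<Rightarrow> 'n \<Rightarrow> 'n \<Rightarrow> real^'n \<Rightarrow> real) \<Rightarrow> 'n form1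
    \<Rightarrow> 'n \<Rightarrow> 'n \<Rightarrow> real^'n \<Rightarrow> complex" where
  "ctorsion Gam eta = (\<lambda>m n x. (\<Sum>j\<in>UNIV. wedge (dx j) (covd Gam j eta) m n x) - dform eta m n x)"

end

theory Submission
  imports Defs
begin

text \<open>
  At order zero \<open>\<nabla>\<^sub>Q\<close> is \<open>\<nabla>\<close>, which gives the classical torsion. At order \<open>\<lambda>\<close> the
  correction term of \<open>q\<^sup>-\<^sup>1\<close> cancels the \<open>\<omega>\<close>-term of \<open>\<and>\<^sub>1\<close> evaluated on
  \<open>dx\<^sup>k \<otimes> \<nabla>\<^sub>k\<xi>\<close>, so besides \<open>dx\<^sup>k \<and> \<nabla>\<^sub>k\<xi>\<close> only two terms remain: the
  \<open>H\<close>-term \<open>H\<^sup>k\<^sup>j (\<nabla>\<^sub>k\<xi>)\<^sub>j\<close> and the commutator term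
  \<open>-\<onehalf> \<omega>\<^sup>i\<^sup>j dx\<^sup>k \<and> [\<nabla>\<^sub>k,\<nabla>\<^sub>j]\<nabla>\<^sub>i\<xi>\<close> of \<open>\<nabla>\<^sub>Q\<close>. By the Ricci identity
  \<open>[\<nabla>\<^sub>m,\<nabla>\<^sub>j]\<eta>\<^sub>n = -\<eta>\<^sub>k R\<^sup>k\<^sub>n\<^sub>m\<^sub>j\<close>, whose analytic input is the symmetry of
  second partial derivatives, the commutator term is the curvature part of the \<open>H\<close>-term with
  the opposite sign, and only \<open>\<onequarter> \<omega>\<^sup>i\<^sup>s T\<^sup>j\<^sub>n\<^sub>m\<^sub>;\<^sub>s (\<nabla>\<^sub>i\<xi>)\<^sub>j\<close> survives.
\<close>

section \<open>Partial derivatives\<close>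

lemma has_vector_derivative_along_line:
  assumes "(f has_derivative D) (at (p + t *\<^sub>R v))"
  shows "((\<lambda>t. f (p + t *\<^sub>R v)) has_vector_derivative D v) (at t)"
proof -
  have "((\<lambda>t. p + t *\<^sub>R v) has_derivative (\<lambda>t. t *\<^sub>R v)) (at t)"
    by (auto intro!: derivative_eq_intros)
  then have "((\<lambda>t. f (p + t *\<^sub>R v)) has_derivative (\<lambda>t. D (t *\<^sub>R v))) (at t)"
    using has_derivative_compose assms by blast
  moreover have "(\<lambda>t. D (t *\<^sub>R v)) = (\<lambda>t. t *\<^sub>R D v)"
    using assms has_derivative_linear linear_scale by blast
  ultimately show ?thesis by (simp add: has_vector_derivative_def)
qed

lemma pd_eq_derivative:
  assumes "(f has_derivative D) (at x)"
  shows "pd i f x = D (axis i 1)"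
  unfolding pd_def
  using has_vector_derivative_along_line[of f D x 0] assms by (simp add: vector_derivative_at)

lemma has_vector_derivative_pd:
  assumes "f differentiable at (p + t *\<^sub>R axis i 1)"
  shows "((\<lambda>t. f (p + t *\<^sub>R axis i 1)) has_vector_derivative pd i f (p + t *\<^sub>R axis i 1)) (at t)"
proof -
  obtain D where "(f has_derivative D) (at (p + t *\<^sub>R axis i 1))"
    using assms unfolding differentiable_def by blast
  then show ?thesis using has_vector_derivative_along_line pd_eq_derivative by metis
qed

lemma pd_const [simp]: "pd i (\<lambda>x. c) = (\<lambda>x. 0)"
  using pd_eq_derivative[OF has_derivative_const] by blast

lemma pd_add:
  assumes "f differentiable at x" "g differentiable at x"
  shows "pd i (\<lambda>x. f x + g x) x = pd i f x + pd i g x"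
  using assms pd_eq_derivative has_derivative_add unfolding differentiable_def
  by (metis (no_types))

lemma pd_diff:
  assumes "f differentiable at x" "g differentiable at x"
  shows "pd i (\<lambda>x. f x - g x) x = pd i f x - pd i g x"
  using assms pd_eq_derivative has_derivative_diff unfolding differentiable_def
  by (metis (no_types))

lemma pd_mult:
  fixes f g :: "real^'n::finite \<Rightarrow> 'a::real_normed_algebra"
  assumes "f differentiable at x" "g differentiable at x"
  shows "pd i (\<lambda>x. f x * g x) x = f x * pd i g x + pd i f x * g x"
proof -
  obtain D E where D: "(f has_derivative D) (at x)" and E: "(g has_derivative E) (at x)"
    using assms unfolding differentiable_def by blast
  show ?thesis
    using pd_eq_derivative[OF has_derivative_mult[OF D E]] pd_eq_derivative[OF D]
      pd_eq_derivative[OF E] by simp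
qed

lemma pd_of_real:
  fixes f :: "real^'n::finite \<Rightarrow> real"
  assumes "f differentiable at x"
  shows "pd i (\<lambda>x. complex_of_real (f x)) x = complex_of_real (pd i f x)"
  using assms pd_eq_derivative has_derivative_of_real unfolding differentiable_def
  by (metis (no_types))

lemma differentiable_of_real:
  fixes f :: "real^'n::finite \<Rightarrow> real"
  assumes "f differentiable at x"
  shows "(\<lambda>x. complex_of_real (f x)) differentiable at x"
  using assms has_derivative_of_real unfolding differentiable_def by blast

lemma pd_sum:
  assumes "finite A" "\<And>a. a \<in> A \<Longrightarrow> f a differentiable at x"
  shows "pd i (\<lambda>x. \<Sum>a\<in>A. f a x) x = (\<Sum>a\<in>A. pd i (f a) x)"
proof -
  obtain D where D: "\<And>a. a \<in> A \<Longrightarrow> (f a has_derivative D a) (at x)"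
    using assms(2) unfolding differentiable_def by metis
  have "((\<lambda>x. \<Sum>a\<in>A. f a x) has_derivative (\<lambda>h. \<Sum>a\<in>A. D a h)) (at x)"
    using D by (rule has_derivative_sum)
  then show ?thesis using pd_eq_derivative[OF D] pd_eq_derivative by simp
qed

lemma pd_translate: "pd i (\<lambda>y. f (y + c)) x = pd i f (x + c)"
  unfolding pd_def by (simp add: algebra_simps)

lemma differentiable_translate:
  assumes "f differentiable at (x + c)"
  shows "(\<lambda>y. f (y + c)) differentiable at x"
proof -
  have "(\<lambda>y. y + c) differentiable at x" by simp
  then show ?thesis using differentiable_chain_at[of "\<lambda>y. y + c" x f] assms by (simp add: o_def)
qed

lemma differentiable_transform_open:
  assumes "open U" "x \<in> U" "\<And>y. y \<in> U \<Longrightarrow> f y = g y" "f differentiable at x"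
  shows "g differentiable at x"
  using assms has_derivative_transform_within_open unfolding differentiable_def by metis

lemma pd_cong:
  assumes "open U" "x \<in> U" "\<And>y. y \<in> U \<Longrightarrow> f y = g y"
  shows "pd i f x = pd i g x"
proof -
  have "((\<lambda>t. x + t *\<^sub>R axis i 1) \<longlongrightarrow> x) (nhds 0)"
    using filterlim_ident[of "nhds (0::real)"] by (intro tendsto_eq_intros) auto
  then have "eventually (\<lambda>t. x + t *\<^sub>R axis i 1 \<in> U) (nhds 0)"
    using assms(1,2) topological_tendstoD by blast
  then have "eventually (\<lambda>t. t \<in> UNIV \<longrightarrow> f (x + t *\<^sub>R axis i 1) = g (x + t *\<^sub>R axis i 1)) (nhds 0)"
    by eventually_elim (use assms(3) in auto)
  then show ?thesis unfolding pd_def by (intro vector_derivative_cong_eq) auto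
qed

section \<open>Iterated differentiability\<close>

fun pd_differentiable_on :: "nat \<Rightarrow> (real^'n::finite) set \<Rightarrow> (real^'n \<Rightarrow> 'a::real_normed_vector) \<Rightarrow> bool"
  where
    "pd_differentiable_on 0 U f \<longleftrightarrow> (\<forall>x\<in>U. f differentiable at x)"
  | "pd_differentiable_on (Suc k) U f \<longleftrightarrow>
       (\<forall>x\<in>U. f differentiable at x) \<and> (\<forall>i. pd_differentiable_on k U (pd i f))"

lemma pd_differentiable_on_imp_differentiable:
  "pd_differentiable_on k U f \<Longrightarrow> x \<in> U \<Longrightarrow> f differentiable at x"
  by (cases k) auto

lemma pd_differentiable_on_Suc_imp: "pd_differentiable_on (Suc k) U f \<Longrightarrow> pd_differentiable_on k U f"
  by (induction k arbitrary: f) auto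

lemma pd_differentiable_on_cong:
  assumes "open U" "pd_differentiable_on k U f" "\<And>x. x \<in> U \<Longrightarrow> f x = g x"
  shows "pd_differentiable_on k U g"
  using assms(2,3)
proof (induction k arbitrary: f g)
  case 0
  then show ?case using differentiable_transform_open[OF assms(1) _ "0.prems"(2)] by auto
next
  case (Suc k)
  have "pd_differentiable_on k U (pd i g)" for i
  proof (rule Suc.IH)
    show "pd_differentiable_on k U (pd i f)" using Suc.prems(1) by simp
    show "pd i f x = pd i g x" if "x \<in> U" for x
      using pd_cong[OF assms(1) that Suc.prems(2)] .
  qed
  then show ?case
    using Suc.prems(1) differentiable_transform_open[OF assms(1) _ Suc.prems(2)] by auto
qed

lemma smooth_in_imp_pd_differentiable_on:
  assumes "smooth_in f U"
  shows "pd_differentiable_on k U f"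
  using assms
proof (induction k arbitrary: f)
  case 0
  then show ?case using pds.simps(1) unfolding smooth_in_def by (metis pd_differentiable_on.simps(1))
next
  case (Suc k)
  have pds_pd: "pds is (pd i f) = pds (is @ [i]) f" for "is" i
    by (induction "is") auto
  have "smooth_in (pd i f) U" for i
    using Suc.prems unfolding smooth_in_def pds_pd by blast
  then show ?case
    using Suc pds.simps(1) unfolding smooth_in_def by (metis pd_differentiable_on.simps(2))
qed

lemma pd_differentiable_on_const: "pd_differentiable_on k U (\<lambda>x. c)"
  by (induction k arbitrary: c) simp_all

lemma pd_differentiable_on_add:
  assumes "open U" "pd_differentiable_on k U f" "pd_differentiable_on k U g"
  shows "pd_differentiable_on k U (\<lambda>x. f x + g x)"
  using assms(2,3)
proof (induction k arbitrary: f g)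
  case (Suc k)
  have "pd_differentiable_on k U (\<lambda>x. pd i f x + pd i g x)" for i
    using Suc by simp
  then have "pd_differentiable_on k U (pd i (\<lambda>x. f x + g x))" for i
    by (rule pd_differentiable_on_cong[OF assms(1)]) (use Suc.prems in \<open>simp add: pd_add\<close>)
  then show ?case using Suc.prems by auto
qed auto

lemma pd_differentiable_on_diff:
  assumes "open U" "pd_differentiable_on k U f" "pd_differentiable_on k U g"
  shows "pd_differentiable_on k U (\<lambda>x. f x - g x)"
  using assms(2,3)
proof (induction k arbitrary: f g)
  case (Suc k)
  have "pd_differentiable_on k U (\<lambda>x. pd i f x - pd i g x)" for i
    using Suc by simp
  then have "pd_differentiable_on k U (pd i (\<lambda>x. f x - g x))" for i
    by (rule pd_differentiable_on_cong[OF assms(1)]) (use Suc.prems in \<open>simp add: pd_diff\<close>)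
  then show ?case using Suc.prems by auto
qed auto

lemma pd_differentiable_on_sum:
  assumes "open U" "finite A" "\<And>a. a \<in> A \<Longrightarrow> pd_differentiable_on k U (f a)"
  shows "pd_differentiable_on k U (\<lambda>x. \<Sum>a\<in>A. f a x)"
  using assms(2,3)
  by (induction A rule: finite_induct)
    (simp_all add: pd_differentiable_on_const pd_differentiable_on_add[OF assms(1)])

lemma pd_differentiable_on_mult:
  fixes f g :: "real^'n::finite \<Rightarrow> 'a::real_normed_algebra"
  assumes "open U" "pd_differentiable_on k U f" "pd_differentiable_on k U g"
  shows "pd_differentiable_on k U (\<lambda>x. f x * g x)"
  using assms(2,3)
proof (induction k arbitrary: f g)
  case (Suc k)
  have "pd_differentiable_on k U (\<lambda>x. f x * pd i g x + pd i f x * g x)" for i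
    using Suc.prems by (intro pd_differentiable_on_add[OF assms(1)] Suc.IH)
      (auto intro: pd_differentiable_on_Suc_imp)
  then have "pd_differentiable_on k U (pd i (\<lambda>x. f x * g x))" for i
    by (rule pd_differentiable_on_cong[OF assms(1)]) (use Suc.prems in \<open>simp add: pd_mult\<close>)
  then show ?case using Suc.prems by auto
qed auto

lemma pd_differentiable_on_of_real:
  fixes f :: "real^'n::finite \<Rightarrow> real"
  assumes "open U" "pd_differentiable_on k U f"
  shows "pd_differentiable_on k U (\<lambda>x. complex_of_real (f x))"
  using assms(2)
proof (induction k arbitrary: f)
  case 0
  then show ?case using differentiable_of_real by auto
next
  case (Suc k)
  have "pd_differentiable_on k U (\<lambda>x. complex_of_real (pd i f x))" for i
    using Suc by simp
  then have "pd_differentiable_on k U (pd i (\<lambda>x. complex_of_real (f x)))" for i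
    by (rule pd_differentiable_on_cong[OF assms(1)]) (use Suc.prems in \<open>simp add: pd_of_real\<close>)
  then show ?case
    using Suc.prems differentiable_of_real by auto
qed

section \<open>Symmetry of second partial derivatives\<close>

lemma pd_increment_bound:
  fixes f :: "real^'n::finite \<Rightarrow> 'a::real_normed_vector"
  assumes "0 \<le> h"
    and "\<And>s. s \<in> {0..h} \<Longrightarrow> f differentiable at (p + s *\<^sub>R axis i 1)"
    and "\<And>s. s \<in> {0..h} \<Longrightarrow> norm (pd i f (p + s *\<^sub>R axis i 1) - A) \<le> \<epsilon>"
  shows "norm (f (p + h *\<^sub>R axis i 1) - f p - h *\<^sub>R A) \<le> \<epsilon> * h"
proof -
  define \<phi> where "\<phi> s = f (p + s *\<^sub>R axis i 1) - s *\<^sub>R A" for s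
  define \<phi>' where "\<phi>' s = pd i f (p + s *\<^sub>R axis i 1) - A" for s
  have "norm (\<phi> h - \<phi> 0) \<le> \<epsilon> * norm (h - 0)"
  proof (rule differentiable_bound[where f'="\<lambda>s t. t *\<^sub>R \<phi>' s"])
    show "(\<phi> has_derivative (\<lambda>t. t *\<^sub>R \<phi>' s)) (at s within {0..h})" if "s \<in> {0..h}" for s
    proof -
      have "(\<phi> has_vector_derivative \<phi>' s) (at s)"
        unfolding \<phi>_def \<phi>'_def using that assms(2)
        by (intro has_vector_derivative_diff has_vector_derivative_pd)
          (auto intro!: derivative_eq_intros simp: has_vector_derivative_def)
      then show ?thesis by (simp add: has_vector_derivative_def has_derivative_at_withinI)
    qed
    show "onorm (\<lambda>t. t *\<^sub>R \<phi>' s) \<le> \<epsilon>" if "s \<in> {0..h}" for s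
      using onorm_scaleR_left[of "\<lambda>t. t" "\<phi>' s"] onorm_id[where 'a=real] assms(3)[OF that]
      by (simp add: \<phi>'_def)
  qed (use assms(1) in auto)
  then show ?thesis using assms(1) by (simp add: \<phi>_def algebra_simps)
qed

lemma second_difference_bound:
  fixes f :: "real^'n::finite \<Rightarrow> 'a::real_normed_vector"
  assumes "0 \<le> h"
    and "\<And>t s. t \<in> {0..h} \<Longrightarrow> s \<in> {0..h} \<Longrightarrow>
      f differentiable at (x + t *\<^sub>R axis m 1 + s *\<^sub>R axis j 1) \<and>
      pd m f differentiable at (x + t *\<^sub>R axis m 1 + s *\<^sub>R axis j 1) \<and>
      norm (pd j (pd m f) (x + t *\<^sub>R axis m 1 + s *\<^sub>R axis j 1) - A) \<le> \<epsilon>"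
  shows "norm (f (x + h *\<^sub>R axis m 1 + h *\<^sub>R axis j 1) - f (x + h *\<^sub>R axis m 1)
           - f (x + h *\<^sub>R axis j 1) + f x - (h * h) *\<^sub>R A) \<le> \<epsilon> * (h * h)"
proof -
  define em ej :: "real^'n" where "em = axis m 1" and "ej = axis j 1"
  define F where "F y = f (y + h *\<^sub>R ej) - f y" for y
  have F_diff: "F differentiable at (x + t *\<^sub>R em)"
    and pd_F: "pd m F (x + t *\<^sub>R em) = pd m f (x + t *\<^sub>R em + h *\<^sub>R ej) - pd m f (x + t *\<^sub>R em)"
    if "t \<in> {0..h}" for t
    using assms(1) assms(2)[of t 0] assms(2)[of t h] that unfolding F_def em_def ej_def
    by (simp_all add: differentiable_diff differentiable_translate pd_diff pd_translate)
  have slope: "norm (pd m F (x + t *\<^sub>R em) - h *\<^sub>R A) \<le> \<epsilon> * h" if t: "t \<in> {0..h}" for t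
  proof -
    have "norm (pd m f (x + t *\<^sub>R em + h *\<^sub>R ej) - pd m f (x + t *\<^sub>R em) - h *\<^sub>R A) \<le> \<epsilon> * h"
      by (rule pd_increment_bound[of h "pd m f" "x + t *\<^sub>R em" j A \<epsilon>, folded ej_def])
        (use assms t in \<open>auto simp: em_def ej_def\<close>)
    then show ?thesis using pd_F[OF t] by simp
  qed
  have "norm (F (x + h *\<^sub>R em) - F x - h *\<^sub>R (h *\<^sub>R A)) \<le> (\<epsilon> * h) * h"
    by (rule pd_increment_bound[of h F x m "h *\<^sub>R A" "\<epsilon> * h", folded em_def])
      (use assms(1) F_diff slope in auto)
  then show ?thesis by (simp add: F_def em_def ej_def algebra_simps)
qed

lemma second_difference_approx:
  fixes f :: "real^'n::finite \<Rightarrow> 'a::real_normed_vector"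
  assumes "open U" "x \<in> U" "pd_differentiable_on 2 U f" "\<epsilon> > 0"
  shows "\<exists>\<delta>>0. \<forall>h. 0 < h \<and> h < \<delta> \<longrightarrow>
     norm (f (x + h *\<^sub>R axis m 1 + h *\<^sub>R axis j 1) - f (x + h *\<^sub>R axis m 1) - f (x + h *\<^sub>R axis j 1)
           + f x - (h * h) *\<^sub>R pd j (pd m f) x) \<le> \<epsilon> * (h * h)"
proof -
  define A where "A = pd j (pd m f) x"
  obtain \<delta>0 where \<delta>0: "\<delta>0 > 0" "ball x \<delta>0 \<subseteq> U"
    using assms(1,2) open_contains_ball by blast
  have "pd j (pd m f) differentiable at x"
    using assms(2,3) by (simp add: numeral_2_eq_2)
  then have "continuous (at x) (pd j (pd m f))"
    by (rule differentiable_imp_continuous_within)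
  then obtain \<delta>1 where \<delta>1: "\<delta>1 > 0" "\<And>y. dist y x < \<delta>1 \<Longrightarrow> norm (pd j (pd m f) y - A) < \<epsilon>"
    unfolding continuous_at_eps_delta A_def dist_norm using assms(4) by blast
  define \<delta> where "\<delta> = min \<delta>0 \<delta>1 / 2"
  have "f differentiable at y \<and> pd m f differentiable at y \<and> norm (pd j (pd m f) y - A) \<le> \<epsilon>"
    if "t \<in> {0..h}" "s \<in> {0..h}" "h < \<delta>" and y: "y = x + t *\<^sub>R axis m 1 + s *\<^sub>R axis j 1"
    for t s h y
  proof -
    have "norm (t *\<^sub>R axis m 1 + s *\<^sub>R axis j 1 :: real^'n) \<le> t + s"
      using norm_triangle_ineq[of "t *\<^sub>R axis m 1" "s *\<^sub>R (axis j 1 :: real^'n)"] that by simp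
    then have "dist y x < min \<delta>0 \<delta>1"
      using that by (simp add: dist_norm \<delta>_def add.assoc)
    then have "y \<in> U" "norm (pd j (pd m f) y - A) < \<epsilon>"
      using \<delta>0 \<delta>1 by (auto simp: dist_commute)
    then show ?thesis
      using assms(3) by (simp add: numeral_2_eq_2 pd_differentiable_on_imp_differentiable)
  qed
  then have "norm (f (x + h *\<^sub>R axis m 1 + h *\<^sub>R axis j 1) - f (x + h *\<^sub>R axis m 1)
      - f (x + h *\<^sub>R axis j 1) + f x - (h * h) *\<^sub>R A) \<le> \<epsilon> * (h * h)" if "0 < h" "h < \<delta>" for h
    using that by (intro second_difference_bound) auto
  moreover have "\<delta> > 0" using \<delta>0(1) \<delta>1(1) by (simp add: \<delta>_def)
  ultimately show ?thesis unfolding A_def by blast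
qed

lemma pd_commute:
  fixes f :: "real^'n::finite \<Rightarrow> 'a::real_normed_vector"
  assumes "open U" "x \<in> U" "pd_differentiable_on 2 U f"
  shows "pd j (pd m f) x = pd m (pd j f) x"
proof (rule ccontr)
  define A B where "A = pd j (pd m f) x" and "B = pd m (pd j f) x"
  define \<Delta> where "\<Delta> h = f (x + h *\<^sub>R axis m 1 + h *\<^sub>R axis j 1) - f (x + h *\<^sub>R axis m 1)
    - f (x + h *\<^sub>R axis j 1) + f x" for h
  assume "pd j (pd m f) x \<noteq> pd m (pd j f) x"
  then have \<epsilon>: "norm (A - B) / 4 > 0" by (simp add: A_def B_def)
  obtain \<delta>a where a: "\<delta>a > 0" "\<And>h. 0 < h \<Longrightarrow> h < \<delta>a \<Longrightarrow> norm (\<Delta> h - (h * h) *\<^sub>R A) \<le> norm (A - B) / 4 * (h * h)"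
    using second_difference_approx[OF assms \<epsilon>, of m j] unfolding \<Delta>_def A_def by blast
  obtain \<delta>b where b: "\<delta>b > 0" "\<And>h. 0 < h \<Longrightarrow> h < \<delta>b \<Longrightarrow> norm (\<Delta> h - (h * h) *\<^sub>R B) \<le> norm (A - B) / 4 * (h * h)"
    using second_difference_approx[OF assms \<epsilon>, of j m] unfolding \<Delta>_def B_def
    by (auto simp: algebra_simps)
  define h where "h = min \<delta>a \<delta>b / 2"
  have h: "0 < h" "h < \<delta>a" "h < \<delta>b" using a b by (auto simp: h_def)
  have "norm ((h * h) *\<^sub>R (A - B)) \<le> norm (\<Delta> h - (h * h) *\<^sub>R B) + norm (\<Delta> h - (h * h) *\<^sub>R A)"
    using norm_triangle_ineq4[of "\<Delta> h - (h * h) *\<^sub>R B" "\<Delta> h - (h * h) *\<^sub>R A"]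
    by (simp add: algebra_simps)
  also have "\<dots> \<le> norm (A - B) / 4 * (h * h) + norm (A - B) / 4 * (h * h)"
    using a(2)[OF h(1,2)] b(2)[OF h(1,3)] by (rule add_mono[rotated])
  also have "\<dots> = (h * h) * (norm (A - B) / 2)"
    by simp
  finally show False using h(1) \<epsilon> by (simp add: mult_le_cancel_left_pos)
qed

section \<open>The Ricci identity\<close>

lemma covd_dx: "covd Gam j (dx k) m = (\<lambda>x. - complex_of_real (Gam k j m x))"
  unfolding covd_def dx_def by (simp add: if_distrib cong: if_cong)

lemma covd_zero: "covd Gam j (\<lambda>k x. 0) = (\<lambda>k x. 0)"
  unfolding covd_def by simp

lemma pd_differentiable_on_covd:
  assumes "open U" "\<And>a b c. pd_differentiable_on k U (Gam a b c)"
    and "\<And>q. pd_differentiable_on (Suc k) U (\<eta> q)"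
  shows "pd_differentiable_on k U (covd Gam i \<eta> n)"
proof -
  have "pd_differentiable_on k U (\<eta> q)" "pd_differentiable_on k U (pd i (\<eta> q))" for q
    using assms(3)[of q] pd_differentiable_on_Suc_imp by auto
  then show ?thesis
    unfolding covd_def using assms(1,2)
    by (intro pd_differentiable_on_diff pd_differentiable_on_sum pd_differentiable_on_mult
        pd_differentiable_on_of_real) auto
qed

lemma curv_christoffel:
  assumes "\<And>a b c. Gam a b c differentiable at x"
  shows "curv Gam k n m j x = complex_of_real (pd m (Gam k j n) x - pd j (Gam k m n) x
     - (\<Sum>p\<in>UNIV. Gam p m n x * Gam k j p x) + (\<Sum>p\<in>UNIV. Gam p j n x * Gam k m p x))"
proof -
  have expand: "covd Gam a (covd Gam b (dx k)) n x = - complex_of_real (pd a (Gam k b n) x)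
     + (\<Sum>p\<in>UNIV. complex_of_real (Gam p a n x) * complex_of_real (Gam k b p x))" for a b
    using assms
    by (simp add: covd_def[of Gam a "covd Gam b (dx k)"] covd_dx pd_of_real differentiable_of_real
        pd_diff[of "\<lambda>x. 0", simplified] sum_negf)
  show ?thesis unfolding curv_def expand by (simp add: algebra_simps)
qed

lemma covd_covd:
  assumes "\<And>q. Gam q b n differentiable at x" "\<And>q. \<eta> q differentiable at x"
    and "pd b (\<eta> n) differentiable at x"
  shows "covd Gam a (covd Gam b \<eta>) n x = pd a (pd b (\<eta> n)) x
     - (\<Sum>q\<in>UNIV. complex_of_real (Gam q b n x) * pd a (\<eta> q) x
                  + complex_of_real (pd a (Gam q b n) x) * \<eta> q x)
     - (\<Sum>p\<in>UNIV. complex_of_real (Gam p a n x) * covd Gam b \<eta> p x)"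
proof -
  have "pd a (covd Gam b \<eta> n) x = pd a (pd b (\<eta> n)) x
      - pd a (\<lambda>y. \<Sum>q\<in>UNIV. complex_of_real (Gam q b n y) * \<eta> q y) x"
    unfolding covd_def using assms differentiable_of_real
    by (intro pd_diff) (auto intro!: differentiable_sum differentiable_mult)
  also have "pd a (\<lambda>y. \<Sum>q\<in>UNIV. complex_of_real (Gam q b n y) * \<eta> q y) x
     = (\<Sum>q\<in>UNIV. pd a (\<lambda>y. complex_of_real (Gam q b n y) * \<eta> q y) x)"
    using assms(1,2) differentiable_of_real
    by (intro pd_sum) (auto intro!: differentiable_mult)
  also have "\<dots> = (\<Sum>q\<in>UNIV. complex_of_real (Gam q b n x) * pd a (\<eta> q) x
                  + complex_of_real (pd a (Gam q b n) x) * \<eta> q x)"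
  proof (rule sum.cong[OF refl])
    fix q
    have "(\<lambda>y. complex_of_real (Gam q b n y)) differentiable at x"
      using assms(1) by (rule differentiable_of_real)
    then show "pd a (\<lambda>y. complex_of_real (Gam q b n y) * \<eta> q y) x
      = complex_of_real (Gam q b n x) * pd a (\<eta> q) x + complex_of_real (pd a (Gam q b n) x) * \<eta> q x"
      using assms(1,2) by (simp add: pd_mult pd_of_real)
  qed
  finally show ?thesis by (simp add: covd_def[of Gam a "covd Gam b \<eta>"])
qed

lemma sum_mult_curv:
  assumes "\<And>a b c. Gam a b c differentiable at x"
  shows "(\<Sum>k\<in>UNIV. e k * curv Gam k n m j x)
    = (\<Sum>k\<in>UNIV. complex_of_real (pd m (Gam k j n) x) * e k)
      - (\<Sum>k\<in>UNIV. complex_of_real (pd j (Gam k m n) x) * e k)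
      - (\<Sum>p\<in>UNIV. \<Sum>q\<in>UNIV. complex_of_real (Gam p m n x) * complex_of_real (Gam q j p x) * e q)
      + (\<Sum>p\<in>UNIV. \<Sum>q\<in>UNIV. complex_of_real (Gam p j n x) * complex_of_real (Gam q m p x) * e q)"
proof -
  define G where "G p a b = complex_of_real (Gam p a b x)" for p a b
  define dG where "dG i p a b = complex_of_real (pd i (Gam p a b) x)" for i p a b
  have summand: "e k * curv Gam k n m j x = dG m k j n * e k - dG j k m n * e k
      - (\<Sum>p\<in>UNIV. G p m n * G k j p * e k) + (\<Sum>p\<in>UNIV. G p j n * G k m p * e k)" for k
  proof -
    have "curv Gam k n m j x = dG m k j n - dG j k m n
        - (\<Sum>p\<in>UNIV. G p m n * G k j p) + (\<Sum>p\<in>UNIV. G p j n * G k m p)"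
      unfolding curv_christoffel[where Gam = Gam and x = x, OF assms] G_def dG_def by simp
    then have "e k * curv Gam k n m j x = e k * dG m k j n - e k * dG j k m n
        - e k * (\<Sum>p\<in>UNIV. G p m n * G k j p) + e k * (\<Sum>p\<in>UNIV. G p j n * G k m p)"
      by (simp only: ring_distribs)
    then show ?thesis by (simp add: sum_distrib_left mult_ac)
  qed
  have swap: "(\<Sum>k\<in>UNIV. \<Sum>p\<in>UNIV. G p a b * G k c p * e k)
      = (\<Sum>p\<in>UNIV. \<Sum>q\<in>UNIV. G p a b * G q c p * e q)" for a b c
    by (rule sum.swap)
  have "(\<Sum>k\<in>UNIV. e k * curv Gam k n m j x) = (\<Sum>k\<in>UNIV. dG m k j n * e k)
      - (\<Sum>k\<in>UNIV. dG j k m n * e k) - (\<Sum>p\<in>UNIV. \<Sum>q\<in>UNIV. G p m n * G q j p * e q)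
      + (\<Sum>p\<in>UNIV. \<Sum>q\<in>UNIV. G p j n * G q m p * e q)"
    unfolding summand sum.distrib sum_subtractf swap ..
  then show ?thesis unfolding G_def dG_def .
qed

lemma covd_commutator:
  assumes "open U" "x \<in> U" "\<And>a b c. Gam a b c differentiable at x"
    and "\<And>q. pd_differentiable_on 2 U (\<eta> q)"
  shows "covd Gam m (covd Gam j \<eta>) n x - covd Gam j (covd Gam m \<eta>) n x
       = - (\<Sum>k\<in>UNIV. \<eta> k x * curv Gam k n m j x)"
proof -
  have \<eta>_diff: "\<eta> q differentiable at x" "pd b (\<eta> q) differentiable at x" for q b
    using assms(2) assms(4)[of q] by (simp_all add: numeral_2_eq_2)
  define G where "G p a b = complex_of_real (Gam p a b x)" for p a b
  define dG where "dG i p a b = complex_of_real (pd i (Gam p a b) x)" for i p a b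
  define e where "e q = \<eta> q x" for q
  define de where "de i q = pd i (\<eta> q) x" for i q
  have expand: "covd Gam a (covd Gam b \<eta>) n x = pd a (pd b (\<eta> n)) x
      - (\<Sum>q\<in>UNIV. G q b n * de a q) - (\<Sum>q\<in>UNIV. dG a q b n * e q) - (\<Sum>p\<in>UNIV. G p a n * de b p)
      + (\<Sum>p\<in>UNIV. \<Sum>q\<in>UNIV. G p a n * G q b p * e q)" for a b
    using covd_covd[where a=a and b=b, OF assms(3) \<eta>_diff]
    by (simp add: covd_def G_def dG_def e_def de_def sum.distrib sum_subtractf right_diff_distrib
        sum_distrib_left mult.assoc)
  have "(\<Sum>k\<in>UNIV. \<eta> k x * curv Gam k n m j x) = (\<Sum>k\<in>UNIV. dG m k j n * e k)
      - (\<Sum>k\<in>UNIV. dG j k m n * e k) - (\<Sum>p\<in>UNIV. \<Sum>q\<in>UNIV. G p m n * G q j p * e q)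
      + (\<Sum>p\<in>UNIV. \<Sum>q\<in>UNIV. G p j n * G q m p * e q)"
    using sum_mult_curv[where Gam = Gam and x = x, OF assms(3)] unfolding G_def dG_def e_def .
  moreover have "pd m (pd j (\<eta> n)) x = pd j (pd m (\<eta> n)) x"
    using pd_commute[OF assms(1,2,4)] .
  \<comment> \<open>The remaining first-order terms of \<open>expand\<close> are symmetric in \<open>a\<close> and \<open>b\<close>.\<close>
  ultimately show ?thesis
    unfolding expand by (simp add: algebra_simps)
qed

section \<open>Expanding the quantum torsion\<close>

lemma sum_mset_image_mset_set_UNIV:
  "sum_mset (image_mset f (mset_set (UNIV :: 'a::finite set))) = (\<Sum>x\<in>UNIV. f x)"
  by (simp add: sum_unfold_sum_mset)

lemma sum_UNIV_prod: "(\<Sum>p\<in>(UNIV :: ('a::finite \<times> 'b::finite) set). f p) = (\<Sum>i\<in>UNIV. \<Sum>j\<in>UNIV. f (i, j))"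
  by (subst sum.cartesian_product) simp

lemma sum_mset_image_sum_mset:
  "sum_mset (image_mset F (sum_mset (image_mset \<phi> N))) = sum_mset (image_mset (\<lambda>y. sum_mset (image_mset F (\<phi> y))) N)"
  by (induction N) auto

lemma sum_mset_qinv:
  "sum_mset (image_mset (case_prod F) (qinv om Gam M)) = sum_mset (image_mset (\<lambda>(a, b). F a b
     + (\<Sum>i\<in>UNIV. \<Sum>j\<in>UNIV. F (lsc (lmul (\<lambda>x. - complex_of_real (om i j x) / 2) (lcovd Gam i a)))
                               (lcovd Gam j b))) M)"
  unfolding qinv_def sum_mset_image_sum_mset
  by (intro arg_cong[where f = sum_mset] image_mset_cong)
    (auto split: prod.splits simp: multiset.map_comp comp_def sum_mset_image_mset_set_UNIV sum_UNIV_prod)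

lemma sum_mset_nablaQ:
  "sum_mset (image_mset (case_prod F) (nablaQ om Gam xi)) =
     (\<Sum>k\<in>UNIV. F (ldx k) (lcovd Gam k xi)
        + (\<Sum>i\<in>UNIV. \<Sum>j\<in>UNIV. F (lsc (lmul (\<lambda>x. - complex_of_real (om i j x) / 2) (lcovd Gam i (ldx k))))
                                  (lcovd Gam j (lcovd Gam k xi))))
   + (\<Sum>i\<in>UNIV. \<Sum>j\<in>UNIV. \<Sum>k\<in>UNIV. F (lsc (lmul (\<lambda>x. - complex_of_real (om i j x) / 2) (ldx k)))
                                           (lcomm Gam k j (lcovd Gam i xi)))"
  unfolding nablaQ_def image_mset_union sum_mset.union sum_mset_qinv multiset.map_comp
  by (simp add: comp_def sum_mset_image_mset_set_UNIV sum_UNIV_prod)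

lemma sum_dx: "(\<Sum>k\<in>UNIV. dx k m x * f k) = f m"
proof -
  have "(\<Sum>k\<in>UNIV. dx k m x * f k) = (\<Sum>k\<in>UNIV. if m = k then f k else 0)"
    by (rule sum.cong) (auto simp: dx_def)
  then show ?thesis by simp
qed

lemma fst_Wedge1_nablaQ: "fst (Wedge1 om Gam (nablaQ om Gam xi)) m n x = covd Gam m (fst xi) n x"
proof -
  have Wedge1_sum: "fst (Wedge1 om Gam M) m n x
      = sum_mset (image_mset (case_prod (\<lambda>a b. fst (wedge1 om Gam a b) m n x)) M)" for M
    by (simp add: Wedge1_def)
  show ?thesis
    unfolding Wedge1_sum sum_mset_nablaQ by (simp add: wedge1_def wedge_def lsc_def ldx_def lcovd_def sum_dx)
qed

lemma snd_wedge1_lsc: "snd (wedge1 om Gam (lsc a) b) m n x = fst a m x * fst b n x"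
  by (simp add: wedge1_def wedge_def lsc_def covd_zero)

lemma snd_wedge1_ldx:
  "snd (wedge1 om Gam (ldx k) b) m n x = dx k m x * snd b n x
   + (\<Sum>i\<in>UNIV. \<Sum>j\<in>UNIV. complex_of_real (om i j x) / 2
        * (covd Gam i (dx k) m x * covd Gam j (fst b) n x))
   + (\<Sum>j\<in>UNIV. Hform om Gam k j m n x * fst b j x)"
proof -
  have "(\<Sum>j\<in>UNIV. Hform om Gam i j m n x * dx k i x * fst b j x)
      = (if i = k then (\<Sum>j\<in>UNIV. Hform om Gam k j m n x * fst b j x) else 0)" for i
    by (simp add: dx_def)
  then show ?thesis by (simp add: wedge1_def wedge_def ldx_def)
qed

lemma snd_Wedge1_nablaQ:
  "snd (Wedge1 om Gam (nablaQ om Gam xi)) m n x = covd Gam m (snd xi) n x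
   + (\<Sum>k\<in>UNIV. \<Sum>j\<in>UNIV. Hform om Gam k j m n x * covd Gam k (fst xi) j x)
   - (\<Sum>i\<in>UNIV. \<Sum>j\<in>UNIV. complex_of_real (om i j x) / 2 *
        (covd Gam m (covd Gam j (covd Gam i (fst xi))) n x - covd Gam j (covd Gam m (covd Gam i (fst xi))) n x))"
proof -
  have Wedge1_sum: "snd (Wedge1 om Gam M) m n x
      = sum_mset (image_mset (case_prod (\<lambda>a b. snd (wedge1 om Gam a b) m n x)) M)" for M
    by (simp add: Wedge1_def)
  have qinv_cancel: "snd (wedge1 om Gam (ldx k) (lcovd Gam k xi)) m n x
      + (\<Sum>i\<in>UNIV. \<Sum>j\<in>UNIV. snd (wedge1 om Gam
           (lsc (lmul (\<lambda>x. - complex_of_real (om i j x) / 2) (lcovd Gam i (ldx k))))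
           (lcovd Gam j (lcovd Gam k xi))) m n x)
    = dx k m x * covd Gam k (snd xi) n x
      + (\<Sum>j\<in>UNIV. Hform om Gam k j m n x * covd Gam k (fst xi) j x)" for k
    unfolding snd_wedge1_ldx snd_wedge1_lsc
    by (simp add: lmul_def lcovd_def ldx_def sum_negf mult.assoc)
  have commutator_term: "snd (wedge1 om Gam (lsc (lmul (\<lambda>x. - complex_of_real (om i j x) / 2) (ldx k)))
        (lcomm Gam k j (lcovd Gam i xi))) m n x
    = - (dx k m x * (complex_of_real (om i j x) / 2 * (covd Gam k (covd Gam j (covd Gam i (fst xi))) n x
        - covd Gam j (covd Gam k (covd Gam i (fst xi))) n x)))" for i j k
    by (simp add: snd_wedge1_lsc lmul_def ldx_def lcomm_def lsub_def lcovd_def)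
  show ?thesis
    unfolding Wedge1_sum sum_mset_nablaQ qinv_cancel commutator_term sum_negf sum.distrib sum_dx
    by simp
qed

lemma ctorsion_eq_covd: "ctorsion Gam \<eta> m n x = covd Gam m \<eta> n x - pd m (\<eta> n) x"
  by (simp add: ctorsion_def wedge_def dform_def sum_dx)

lemma curvature_terms_cancel:
  fixes w \<eta> T R :: "'n::finite \<Rightarrow> 'n \<Rightarrow> complex"
  shows "(\<Sum>k\<in>UNIV. \<Sum>j\<in>UNIV. (1/4 * (\<Sum>s\<in>UNIV. w k s * (T j s - 2 * R j s))) * \<eta> k j)
    - (\<Sum>i\<in>UNIV. \<Sum>j\<in>UNIV. w i j / 2 * - (\<Sum>k\<in>UNIV. \<eta> i k * R k j))
    = 1/4 * (\<Sum>i\<in>UNIV. \<Sum>j\<in>UNIV. \<Sum>s\<in>UNIV. \<eta> i j * w i s * T j s)"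
proof -
  have split: "(\<Sum>k\<in>UNIV. \<Sum>j\<in>UNIV. (1/4 * (\<Sum>s\<in>UNIV. w k s * (T j s - 2 * R j s))) * \<eta> k j)
     = 1/4 * (\<Sum>i\<in>UNIV. \<Sum>j\<in>UNIV. \<Sum>s\<in>UNIV. \<eta> i j * w i s * T j s)
       - 1/2 * (\<Sum>k\<in>UNIV. \<Sum>j\<in>UNIV. \<Sum>s\<in>UNIV. w k s * \<eta> k j * R j s)"
    by (simp add: sum_distrib_left sum_distrib_right right_diff_distrib left_diff_distrib
        sum_subtractf mult_ac)
  have swap: "(\<Sum>k\<in>UNIV. \<Sum>j\<in>UNIV. \<Sum>s\<in>UNIV. w k s * \<eta> k j * R j s)
     = (\<Sum>i\<in>UNIV. \<Sum>s\<in>UNIV. \<Sum>j\<in>UNIV. w i s * \<eta> i j * R j s)"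
    by (intro sum.cong refl sum.swap)
  have "(\<Sum>i\<in>UNIV. \<Sum>j\<in>UNIV. w i j / 2 * - (\<Sum>k\<in>UNIV. \<eta> i k * R k j))
     = - (1/2 * (\<Sum>i\<in>UNIV. \<Sum>s\<in>UNIV. \<Sum>j\<in>UNIV. w i s * \<eta> i j * R j s))"
    by (simp add: sum_distrib_left sum_negf mult_ac)
  then show ?thesis unfolding split swap by simp
qed

lemma fst_qtorsion: "fst (qtorsion om Gam xi) m n x = ctorsion Gam (fst xi) m n x"
  by (simp add: qtorsion_def fst_Wedge1_nablaQ ctorsion_eq_covd dform_def)

lemma snd_qtorsion:
  assumes "open U" "x \<in> U" "\<And>a b c. Gam a b c differentiable at x"
    and "\<And>i q. pd_differentiable_on 2 U (covd Gam i (fst xi) q)"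
  shows "snd (qtorsion om Gam xi) m n x = ctorsion Gam (snd xi) m n x
      + (1/4) * (\<Sum>i\<in>UNIV. \<Sum>j\<in>UNIV. \<Sum>s\<in>UNIV. covd Gam i (fst xi) j x
                  * complex_of_real (om i s x) * complex_of_real (tors_cd Gam j n m s x))"
proof -
  have ricci: "covd Gam m (covd Gam j (covd Gam i (fst xi))) n x
      - covd Gam j (covd Gam m (covd Gam i (fst xi))) n x
    = - (\<Sum>k\<in>UNIV. covd Gam i (fst xi) k x * curv Gam k n m j x)" for i j
    using covd_commutator[OF assms(1-3) assms(4)] .
  have "snd (qtorsion om Gam xi) m n x = ctorsion Gam (snd xi) m n x
    + ((\<Sum>k\<in>UNIV. \<Sum>j\<in>UNIV. Hform om Gam k j m n x * covd Gam k (fst xi) j x)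
      - (\<Sum>i\<in>UNIV. \<Sum>j\<in>UNIV. complex_of_real (om i j x) / 2 *
          (covd Gam m (covd Gam j (covd Gam i (fst xi))) n x
           - covd Gam j (covd Gam m (covd Gam i (fst xi))) n x)))"
    by (simp add: qtorsion_def snd_Wedge1_nablaQ ctorsion_eq_covd dform_def)
  then show ?thesis
    unfolding ricci Hform_def curvature_terms_cancel .
qed

theorem proposition4p9:
  fixes U :: "(real^'n::finite) set"
    and om :: "'n \<Rightarrow> 'n \<Rightarrow> real^'n \<Rightarrow> real"
    and Gam :: "'n \<Rightarrow> 'n \<Rightarrow> 'n \<Rightarrow> real^'n \<Rightarrow> real"
    and xi :: "('n \<Rightarrow> real^'n \<Rightarrow> complex) \<times> ('n \<Rightarrow> real^'n \<Rightarrow> complex)"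
  assumes "open U"
    and "\<And>i j. smooth_in (om i j) U"
    and "\<And>i j k. smooth_in (Gam i j k) U"
    and "\<And>k. smooth_in (fst xi k) U"
    and "\<And>k. smooth_in (snd xi k) U"
    and "poisson_bivector U om"
    and "poisson_compatible U om Gam"
  shows "eq2 U (fst (qtorsion om Gam xi)) (ctorsion Gam (fst xi)) \<and>
         eq2 U (snd (qtorsion om Gam xi))
           (\<lambda>m n x. ctorsion Gam (snd xi) m n x
              + (1/4) * (\<Sum>i\<in>UNIV. \<Sum>j\<in>UNIV. \<Sum>s\<in>UNIV.
                   covd Gam i (fst xi) j x * complex_of_real (om i s x)
                   * complex_of_real (tors_cd Gam j n m s x)))"
proof -
  have smooth: "pd_differentiable_on k U (Gam a b c)" "pd_differentiable_on k U (fst xi q)"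
    for k a b c q
    using assms(3,4) by (simp_all add: smooth_in_imp_pd_differentiable_on)
  then have "pd_differentiable_on 2 U (covd Gam i (fst xi) q)" for i q
    by (intro pd_differentiable_on_covd[OF assms(1)])
  moreover have "Gam a b c differentiable at x" if "x \<in> U" for a b c x
    using smooth(1) that by (rule pd_differentiable_on_imp_differentiable)
  ultimately show ?thesis
    unfolding eq2_def by (simp add: fst_qtorsion snd_qtorsion[OF assms(1)])
qed

end
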